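(* In $Q_n$, each of the sets $\{x_{\emptyset,k}: k=1,\dots,n\}$ and $\{x_{\{1,\dots,n\}\setminus\{k\},k}: k=1,\dots,n\}$ is a sufficient set, i.e. its $du$-envelope contains a defining set of pseudo-roots of $\mathcal P(t)$.
   Context: Fix a field $k$. $Q_n$ is the associative unital $k$-algebra with generators $x_{A,i}$ ($A\subseteq\{1,\dots,n\}$, $i\notin A$), called pseudo-roots, subject to $x_{A\cup\{i\},j}+x_{A,i}=x_{A\cup\{j\},i}+x_{A,j}$ and $x_{A\cup\{i\},j}\,x_{A,i}=x_{A\cup\{j\},i}\,x_{A,j}$ for all $A$ and $i\ne j$, $i,j\notin A$. With $t$ central, $\mathcal P(t)=(t-x_{A_n,i_n})\cdots(t-x_{A_1,i_1})$ for an ordering $(i_1,\dots,i_n)$ of $\{1,\dots,n\}$ and $A_k=\{i_1,\dots,i_{k-1}\}$ (independent of the ordering). A set $Y$ of pseudo-roots is defining if $\mathcal P(t)=(t-y_n)\cdots(t-y_1)$ with all $y_k\in Y$. The pseudo-root $x_{A,i}$ corresponds to an edge with tail $A\cup\{i\}$ and head $A$. For distinct pseudo-roots $x_{A,i},x_{B,j}$ with $A=B$ (common head), $\xi$ is obtained from the ordered pair by the $u$-operation if $(x_{A,i}-x_{B,j})x_{A,i}=\xi(x_{A,i}-x_{B,j})$; for distinct pseudo-roots with $A\cup\{i\}=B\cup\{j\}$ (common tail), $\eta$ is obtained by the $d$-operation if $(x_{A,i}-x_{B,j})\eta=x_{A,i}(x_{A,i}-x_{B,j})$. The $du$-envelope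 of a set $Z$ of pseudo-roots is the set of pseudo-roots obtained from $Z$ by successive $d$- and $u$-operations; $Z$ is sufficient if its $du$-envelope contains a defining set. *)

theory Defs
  imports Main
begin

text \<open>Noncommutative polynomials over a field 'k in generators 'g: functions from
  words (lists of generators) to 'k (only finitely supported ones are ever built).\<close>

type_synonym ('g, 'k) ncp = "'g list \<Rightarrow> 'k"

definition ncadd :: "('g,'k::field) ncp \<Rightarrow> ('g,'k) ncp \<Rightarrow> ('g,'k) ncp" where
  "ncadd p q = (\<lambda>w. p w + q w)"

definition ncsub :: "('g,'k::field) ncp \<Rightarrow> ('g,'k) ncp \<Rightarrow> ('g,'k) ncp" where
  "ncsub p q = (\<lambda>w. p w - q w)"

definition ncsmul :: "'k::field \<Rightarrow> ('g,'k) ncp \<Rightarrow> ('g,'k) ncp" where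
  "ncsmul c p = (\<lambda>w. c * p w)"

definition ncmul :: "('g,'k::field) ncp \<Rightarrow> ('g,'k) ncp \<Rightarrow> ('g,'k) ncp" where
  "ncmul p q = (\<lambda>w. \<Sum>i\<le>length w. p (take i w) * q (drop i w))"

definition ncword :: "'g list \<Rightarrow> ('g,'k::field) ncp" where
  "ncword u = (\<lambda>w. if w = u then 1 else 0)"

definition ncgen :: "'g \<Rightarrow> ('g,'k::field) ncp" where
  "ncgen g = ncword [g]"

definition ncone :: "('g,'k::field) ncp" where
  "ncone = ncword []"

definition ncprod :: "('g,'k::field) ncp list \<Rightarrow> ('g,'k) ncp" where
  "ncprod ps = foldr ncmul ps ncone"

inductive_set ncideal :: "('g,'k::field) ncp set \<Rightarrow> ('g,'k) ncp set" for R where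
  gen: "r \<in> R \<Longrightarrow> r \<in> ncideal R"
| zero: "(\<lambda>w. 0) \<in> ncideal R"
| add: "p \<in> ncideal R \<Longrightarrow> q \<in> ncideal R \<Longrightarrow> ncadd p q \<in> ncideal R"
| smul: "p \<in> ncideal R \<Longrightarrow> ncsmul c p \<in> ncideal R"
| mult: "p \<in> ncideal R \<Longrightarrow> ncmul (ncmul (ncword u) p) (ncword v) \<in> ncideal R"

text \<open>Generators: Some (A,i) is the pseudo-root x_{A,i}; None is the central variable t.
  The algebra Q_n[t] = Q_n \<otimes> k[t] is the free algebra on these generators modulo the
  ideal generated by the defining relations of Q_n and the commutators [t, x_{A,i}].\<close>

type_synonym pr = "nat set \<times> nat"

definition pseudo_root :: "nat \<Rightarrow> pr \<Rightarrow> bool" where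
  "pseudo_root n p \<longleftrightarrow> fst p \<subseteq> {1..n} \<and> snd p \<in> {1..n} \<and> snd p \<notin> fst p"

definition xr :: "pr \<Rightarrow> (pr option, 'k::field) ncp" where
  "xr p = ncgen (Some p)"

definition tvar :: "(pr option, 'k::field) ncp" where
  "tvar = ncgen None"

definition Qrels :: "nat \<Rightarrow> (pr option, 'k::field) ncp set" where
  "Qrels n =
     {ncsub (ncadd (xr (insert i A, j)) (xr (A, i))) (ncadd (xr (insert j A, i)) (xr (A, j))) | A i j.
        A \<subseteq> {1..n} \<and> i \<in> {1..n} \<and> j \<in> {1..n} \<and> i \<noteq> j \<and> i \<notin> A \<and> j \<notin> A}
   \<union> {ncsub (ncmul (xr (insert i A, j)) (xr (A, i))) (ncmul (xr (insert j A, i)) (xr (A, j))) | A i j.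
        A \<subseteq> {1..n} \<and> i \<in> {1..n} \<and> j \<in> {1..n} \<and> i \<noteq> j \<and> i \<notin> A \<and> j \<notin> A}
   \<union> {ncsub (ncmul tvar (xr p)) (ncmul (xr p) tvar) | p. pseudo_root n p}"

definition Qeq :: "'k::field itself \<Rightarrow> nat \<Rightarrow> (pr option, 'k) ncp \<Rightarrow> (pr option, 'k) ncp \<Rightarrow> bool" where
  "Qeq _ n p q \<longleftrightarrow> ncsub p q \<in> ncideal (Qrels n)"

definition Ppoly :: "nat \<Rightarrow> (pr option, 'k::field) ncp" where
  "Ppoly n = ncprod (map (\<lambda>k. ncsub tvar (xr ({1..<k}, k))) (rev [1..<n+1]))"

definition defining :: "'k::field itself \<Rightarrow> nat \<Rightarrow> pr set \<Rightarrow> bool" where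
  "defining K n Y \<longleftrightarrow> (\<forall>y\<in>Y. pseudo_root n y) \<and>
     (\<exists>ys. length ys = n \<and> set ys \<subseteq> Y \<and>
        Qeq K n (ncprod (map (\<lambda>y. ncsub tvar (xr y)) (rev ys))) (Ppoly n))"

definition uop :: "'k::field itself \<Rightarrow> nat \<Rightarrow> pr \<Rightarrow> pr \<Rightarrow> pr \<Rightarrow> bool" where
  "uop K n a b \<xi> \<longleftrightarrow> pseudo_root n a \<and> pseudo_root n b \<and> pseudo_root n \<xi> \<and> a \<noteq> b \<and>
     fst a = fst b \<and>
     Qeq K n (ncmul (ncsub (xr a) (xr b)) (xr a)) (ncmul (xr \<xi>) (ncsub (xr a) (xr b)))"

definition dop :: "'k::field itself \<Rightarrow> nat \<Rightarrow> pr \<Rightarrow> pr \<Rightarrow> pr \<Rightarrow> bool" where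
  "dop K n a b \<eta> \<longleftrightarrow> pseudo_root n a \<and> pseudo_root n b \<and> pseudo_root n \<eta> \<and> a \<noteq> b \<and>
     insert (snd a) (fst a) = insert (snd b) (fst b) \<and>
     Qeq K n (ncmul (ncsub (xr a) (xr b)) (xr \<eta>)) (ncmul (xr a) (ncsub (xr a) (xr b)))"

inductive_set du_env :: "'k::field itself \<Rightarrow> nat \<Rightarrow> pr set \<Rightarrow> pr set" for K n Z where
  base: "z \<in> Z \<Longrightarrow> z \<in> du_env K n Z"
| u: "a \<in> du_env K n Z \<Longrightarrow> b \<in> du_env K n Z \<Longrightarrow> uop K n a b \<xi> \<Longrightarrow> \<xi> \<in> du_env K n Z"
| d: "a \<in> du_env K n Z \<Longrightarrow> b \<in> du_env K n Z \<Longrightarrow> dop K n a b \<eta> \<Longrightarrow> \<eta> \<in> du_env K n Z"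

definition sufficient :: "'k::field itself \<Rightarrow> nat \<Rightarrow> pr set \<Rightarrow> bool" where
  "sufficient K n Z \<longleftrightarrow> (\<exists>Y. Y \<subseteq> du_env K n Z \<and> defining K n Y)"

end

theory Submission
  imports Defs
begin

text \<open>Both operations can be computed from the defining relations of \<open>Q\<^sub>n\<close> alone: for
  \<open>i \<noteq> j\<close> outside \<open>A\<close>, the \<open>u\<close>-operation applied to \<open>x\<^bsub>A,i\<^esub>, x\<^bsub>A,j\<^esub>\<close> yields
  \<open>x\<^bsub>A\<union>{j},i\<^esub>\<close>, and the \<open>d\<close>-operation applied to \<open>x\<^bsub>A\<union>{j},i\<^esub>, x\<^bsub>A\<union>{i},j\<^esub>\<close> yields
  \<open>x\<^bsub>A,i\<^esub>\<close>. Hence the \<open>du\<close>-envelope of the pseudo-roots with empty head grows upwards to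
  all pseudo-roots (induction on \<open>A\<close>), and that of the pseudo-roots with full tail grows
  downwards to all pseudo-roots (induction on the complement of \<open>A \<union> {i}\<close>). In either case
  the envelope contains the flag \<open>x\<^bsub>{1..k-1},k\<^esub>\<close>, which is defining by the very
  definition of \<open>P(t)\<close>.\<close>

lemma ncmul_ncword_Nil_left: "ncmul (ncword []) p = (p :: ('g,'k::field) ncp)"
proof (rule ext)
  fix w :: "'g list"
  have "(\<Sum>i\<le>length w. ncword [] (take i w) * p (drop i w))
      = ncword [] (take 0 w) * p (drop 0 w)
        + (\<Sum>i<length w. ncword [] (take (Suc i) w) * p (drop (Suc i) w))"
    by (rule sum.atMost_shift)
  also have "\<dots> = p w" by (simp add: ncword_def)
  finally show "ncmul (ncword []) p w = p w" by (simp add: ncmul_def)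
qed

lemma ncmul_ncword_Nil_right: "ncmul p (ncword []) = (p :: ('g,'k::field) ncp)"
proof (rule ext)
  fix w :: "'g list"
  have "(\<Sum>i\<le>length w. p (take i w) * ncword [] (drop i w))
      = (\<Sum>i<length w. p (take i w) * ncword [] (drop i w))
        + p (take (length w) w) * ncword [] (drop (length w) w)"
    by (simp add: lessThan_Suc_atMost[symmetric])
  also have "\<dots> = p w" by (simp add: ncword_def)
  finally show "ncmul p (ncword []) w = p w" by (simp add: ncmul_def)
qed

lemma ncmul_ncadd_left: "ncmul (ncadd p q) r = ncadd (ncmul p r) (ncmul q (r::('g,'k::field) ncp))"
  by (rule ext) (simp add: ncmul_def ncadd_def distrib_right sum.distrib)

lemma ncmul_ncsub_left: "ncmul (ncsub p q) r = ncsub (ncmul p r) (ncmul q (r::('g,'k::field) ncp))"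
  by (rule ext) (simp add: ncmul_def ncsub_def left_diff_distrib sum_subtractf)

lemma ncmul_ncadd_right: "ncmul r (ncadd p q) = ncadd (ncmul r p) (ncmul r (q::('g,'k::field) ncp))"
  by (rule ext) (simp add: ncmul_def ncadd_def distrib_left sum.distrib)

lemma ncmul_ncsub_right: "ncmul r (ncsub p q) = ncsub (ncmul r p) (ncmul r (q::('g,'k::field) ncp))"
  by (rule ext) (simp add: ncmul_def ncsub_def right_diff_distrib sum_subtractf)

lemma ncideal_ncsub:
  assumes "p \<in> ncideal R" "q \<in> ncideal R"
  shows "ncsub p q \<in> ncideal R"
proof -
  have "ncadd p (ncsmul (-1) q) \<in> ncideal R"
    using assms by (intro ncideal.add ncideal.smul)
  moreover have "ncadd p (ncsmul (-1) q) = ncsub p q"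
    by (rule ext) (simp add: ncadd_def ncsmul_def ncsub_def)
  ultimately show ?thesis by simp
qed

lemma ncideal_ncmul_xr_right: "p \<in> ncideal R \<Longrightarrow> ncmul p (xr a) \<in> ncideal R"
  using ncideal.mult[of p R "[]" "[Some a]"] by (simp add: ncmul_ncword_Nil_left xr_def ncgen_def)

lemma ncideal_ncmul_xr_left: "p \<in> ncideal R \<Longrightarrow> ncmul (xr a) p \<in> ncideal R"
  using ncideal.mult[of p R "[Some a]" "[]"] by (simp add: ncmul_ncword_Nil_right xr_def ncgen_def)

lemma Qeq_refl: "Qeq K n p p"
proof -
  have "ncsub p p = (\<lambda>w. 0)" by (rule ext) (simp add: ncsub_def)
  then show ?thesis by (simp add: Qeq_def ncideal.zero)
qed

context
  fixes n :: nat and A :: "nat set" and i j :: nat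
  assumes pseudo_roots: "A \<subseteq> {1..n}" "i \<in> {1..n}" "j \<in> {1..n}" "i \<noteq> j" "i \<notin> A" "j \<notin> A"
begin

lemma Qrel_sum_in_ncideal:
  "ncsub (ncadd (xr (insert i A, j)) (xr (A, i))) (ncadd (xr (insert j A, i)) (xr (A, j)))
     \<in> ncideal (Qrels n :: (pr option, 'k::field) ncp set)"
  using pseudo_roots by (intro ncideal.gen) (unfold Qrels_def, blast)

lemma Qrel_prod_in_ncideal:
  "ncsub (ncmul (xr (insert i A, j)) (xr (A, i))) (ncmul (xr (insert j A, i)) (xr (A, j)))
     \<in> ncideal (Qrels n :: (pr option, 'k::field) ncp set)"
  using pseudo_roots by (intro ncideal.gen) (unfold Qrels_def, blast)

lemma uop_common_head: "uop TYPE('k::field) n (A, i) (A, j) (insert j A, i)"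
proof -
  let ?rel_sum = "ncsub (ncadd (xr (insert i A, j)) (xr (A, i))) (ncadd (xr (insert j A, i)) (xr (A, j)))
    :: (pr option, 'k) ncp"
  let ?rel_prod = "ncsub (ncmul (xr (insert i A, j)) (xr (A, i))) (ncmul (xr (insert j A, i)) (xr (A, j)))
    :: (pr option, 'k) ncp"
  have "ncsub (ncmul ?rel_sum (xr (A, i))) ?rel_prod \<in> ncideal (Qrels n)"
    using Qrel_sum_in_ncideal Qrel_prod_in_ncideal by (blast intro: ncideal_ncsub ncideal_ncmul_xr_right)
  moreover have
    "ncsub (ncmul (ncsub (xr (A, i)) (xr (A, j))) (xr (A, i)))
           (ncmul (xr (insert j A, i)) (ncsub (xr (A, i)) (xr (A, j))))
     = ncsub (ncmul ?rel_sum (xr (A, i))) ?rel_prod"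
    by (simp only: ncmul_ncsub_left ncmul_ncsub_right ncmul_ncadd_left ncmul_ncadd_right)
       (rule ext, simp add: ncsub_def ncadd_def algebra_simps)
  ultimately show ?thesis
    using pseudo_roots by (auto simp: uop_def Qeq_def pseudo_root_def)
qed

lemma dop_common_tail: "dop TYPE('k::field) n (insert j A, i) (insert i A, j) (A, i)"
proof -
  let ?rel_sum = "ncsub (ncadd (xr (insert i A, j)) (xr (A, i))) (ncadd (xr (insert j A, i)) (xr (A, j)))
    :: (pr option, 'k) ncp"
  let ?rel_prod = "ncsub (ncmul (xr (insert i A, j)) (xr (A, i))) (ncmul (xr (insert j A, i)) (xr (A, j)))
    :: (pr option, 'k) ncp"
  have "ncsub (ncmul (xr (insert j A, i)) ?rel_sum) ?rel_prod \<in> ncideal (Qrels n)"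
    using Qrel_sum_in_ncideal Qrel_prod_in_ncideal by (blast intro: ncideal_ncsub ncideal_ncmul_xr_left)
  moreover have
    "ncsub (ncmul (ncsub (xr (insert j A, i)) (xr (insert i A, j))) (xr (A, i)))
           (ncmul (xr (insert j A, i)) (ncsub (xr (insert j A, i)) (xr (insert i A, j))))
     = ncsub (ncmul (xr (insert j A, i)) ?rel_sum) ?rel_prod"
    by (simp only: ncmul_ncsub_left ncmul_ncsub_right ncmul_ncadd_left ncmul_ncadd_right)
       (rule ext, simp add: ncsub_def ncadd_def algebra_simps)
  ultimately show ?thesis
    using pseudo_roots by (auto simp: dop_def Qeq_def pseudo_root_def insert_commute)
qed

end

lemma du_env_empty_heads:
  assumes "A \<subseteq> {1..n}" "i \<in> {1..n}" "i \<notin> A"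
  shows "(A, i) \<in> du_env TYPE('k::field) n {({}, k) | k. k \<in> {1..n}}"
proof -
  have "finite A" using assms(1) finite_subset by blast
  then show ?thesis
    using assms
  proof (induction A arbitrary: i rule: finite_induct)
    case empty
    then show ?case by (auto intro: du_env.base)
  next
    case (insert j A)
    have "(A, i) \<in> du_env TYPE('k) n {({}, k) | k. k \<in> {1..n}}"
     and "(A, j) \<in> du_env TYPE('k) n {({}, k) | k. k \<in> {1..n}}"
      using insert by auto
    moreover have "uop TYPE('k) n (A, i) (A, j) (insert j A, i)"
      using insert.hyps(2) insert.prems by (intro uop_common_head) auto
    ultimately show ?case by (rule du_env.u)
  qed
qed

lemma du_env_full_tails:
  assumes "A \<subseteq> {1..n}" "i \<in> {1..n}" "i \<notin> A"
  shows "(A, i) \<in> du_env TYPE('k::field) n {({1..n} - {k}, k) | k. k \<in> {1..n}}"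
proof -
  have "finite ({1..n} - A - {i})" by simp
  moreover have "finite B \<Longrightarrow> B = {1..n} - A - {i} \<Longrightarrow> A \<subseteq> {1..n} \<Longrightarrow> i \<in> {1..n} \<Longrightarrow>
    i \<notin> A \<Longrightarrow> (A, i) \<in> du_env TYPE('k) n {({1..n} - {k}, k) | k. k \<in> {1..n}}" for B
  proof (induction B arbitrary: A i rule: finite_induct)
    case empty
    then have "A = {1..n} - {i}" by blast
    then show ?case
      using empty.prems(3) by (intro du_env.base) blast
  next
    case (insert j B)
    have j: "j \<in> {1..n}" "j \<noteq> i" "j \<notin> A"
      using insert.prems(1) by blast+
    have complements: "B = {1..n} - insert j A - {i}" "B = {1..n} - insert i A - {j}"
      using insert.hyps(2) insert.prems(1) by blast+
    have "(insert j A, i) \<in> du_env TYPE('k) n {({1..n} - {k}, k) | k. k \<in> {1..n}}"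
      by (rule insert.IH[OF complements(1)]) (use j insert.prems(2-4) in auto)
    moreover have "(insert i A, j) \<in> du_env TYPE('k) n {({1..n} - {k}, k) | k. k \<in> {1..n}}"
      by (rule insert.IH[OF complements(2)]) (use j insert.prems(2-4) in auto)
    moreover have "dop TYPE('k) n (insert j A, i) (insert i A, j) (A, i)"
      using j insert.prems(2-4) by (intro dop_common_tail) auto
    ultimately show ?case by (rule du_env.d)
  qed
  ultimately show ?thesis using assms by blast
qed

lemma defining_flag: "defining TYPE('k::field) n ((\<lambda>k. ({1..<k}, k)) ` {1..n})"
  unfolding defining_def
proof (intro conjI exI)
  let ?ys = "map (\<lambda>k. ({1..<k}, k)) [1..<n+1]"
  show "\<forall>y\<in>(\<lambda>k. ({1..<k}, k)) ` {1..n}. pseudo_root n y"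
    by (auto simp: pseudo_root_def)
  show "length ?ys = n" by simp
  show "set ?ys \<subseteq> (\<lambda>k. ({1..<k}, k)) ` {1..n}" by auto
  have "map (\<lambda>y. ncsub tvar (xr y)) (rev ?ys)
      = map (\<lambda>k. ncsub tvar (xr ({1..<k}, k) :: (pr option, 'k) ncp)) (rev [1..<n+1])"
    by (simp only: rev_map map_map o_def)
  then show "Qeq TYPE('k) n (ncprod (map (\<lambda>y. ncsub tvar (xr y)) (rev ?ys))) (Ppoly n)"
    by (simp only: Ppoly_def Qeq_refl)
qed

theorem proposition1p4p4:
  fixes n :: nat
  shows "sufficient TYPE('k::field) n {({}, k) | k. k \<in> {1..n}} \<and>
         sufficient TYPE('k::field) n {({1..n} - {k}, k) | k. k \<in> {1..n}}"
proof -
  let ?flag = "(\<lambda>k. ({1..<k}, k)) ` {1..n}"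
  have "?flag \<subseteq> du_env TYPE('k) n {({}, k) | k. k \<in> {1..n}}"
    by (rule image_subsetI, rule du_env_empty_heads) auto
  moreover have "?flag \<subseteq> du_env TYPE('k) n {({1..n} - {k}, k) | k. k \<in> {1..n}}"
    by (rule image_subsetI, rule du_env_full_tails) auto
  ultimately show ?thesis
    unfolding sufficient_def using defining_flag by (intro conjI exI[of _ ?flag] conjI)
qed

end
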